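(* Let $R \subseteq \mathbb{N}=\{1,2,\dots\}$. The infinite matrices $[{n \brace k}_R]_{n,k\ge1}$, $[{n \brack k}_R]_{n,k\ge1}$ and $[L(n,k)_R]_{n,k\ge1}$ are invertible if and only if $1 \in R$. Moreover, for every $R$ with $1\in R$ and all $n,k\ge 1$, $$ {n \brace k}^{-1}_{R} = (-1)^{n-k} \left(\left|\mathcal F^{\rm i.o., even}_R(n,k)\right|-\left|\mathcal F^{\rm i.o., odd}_{R}(n,k)\right|\right),$$ $$ {n \brack k}^{-1}_{R} = (-1)^{n-k} \left(\left|\mathcal F^{\rm m.o., even}_R(n,k)\right|-\left|\mathcal F^{\rm m.o., odd}_{R}(n,k)\right|\right),$$ $$ L(n,k)^{-1}_{R} = (-1)^{n-k} \left(\left|\mathcal F^{\rm l.o., even}_R(n,k)\right|-\left|\mathcal F^{\rm l.o., odd}_{R}(n,k)\right|\right).$$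
   Context: For $R\subseteq\mathbb N$: ${n \brace k}_R$ is the number of partitions of $[n]=\{1,\dots,n\}$ into $k$ (unordered) nonempty blocks each of cardinality in $R$; ${n \brack k}_R$ is the number of partitions of $[n]$ into $k$ cycles (cyclically ordered nonempty blocks) each of size in $R$; $L(n,k)_R$ is the number of partitions of $[n]$ into $k$ lists (linearly ordered nonempty blocks) each of size in $R$. Rows are indexed by $n$, columns by $k$. When the inverse exists, ${n \brace k}^{-1}_R$, ${n \brack k}^{-1}_R$, $L(n,k)^{-1}_R$ denote the $(n,k)$ entries of $[{n \brace k}_R]^{-1}_{n,k\ge1}$, $[{n \brack k}_R]^{-1}_{n,k\ge1}$, $[L(n,k)_R]^{-1}_{n,k\ge1}$ respectively. Trees are rooted; a forest is an unordered collection of rooted trees. The down-degree $d(v)$ of a vertex is its number of children; a leaf is a vertex with $d(v)=0$ (an isolated root is a leaf). A phylogenetic forest with $n$ leaves is a rooted forest with unordered children, no vertex of down-degree $1$, together with a bijective labeling of its leaves by $[n]$. For a vertex $v$, $\ell_{\max}(v)$ (resp. $\ell_{\min}(v)$) is the maximum (resp. minimum) leaf label among leaves descended from $v$ (including $v$ itself if it is a leaf). A phylogenetic forest is linearly ordered if each full set of children of a non-leaf vertex is given a linear order (left to right); increasingly ordered if linearly ordered and in each sibling set $\ell_{\max}$ increases from left to right; min-first ordered if linearly ordered and in each sibling set the left-most sibling has the smallest $\ell_{\min}$ among the siblings. $\mathcal F^{\rm i.o.}(n,k)$, $\mathcal F^{\rm m.o.}(n,k)$, $\mathcal F^{\rm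 l.o.}(n,k)$ denote the increasingly, min-first, linearly ordered phylogenetic forests with $n$ leaves and $k$ components; a subscript $R$ restricts to forests all of whose nonzero down-degrees lie in $R$. A forest is even (odd) if its number of edges is even (odd); superscripts "even"/"odd" restrict accordingly. *)

theory Defs
  imports Complex_Main "HOL-Library.Disjoint_Sets" "HOL-Combinatorics.Permutations"
begin

definition stirling2_R :: "nat set \<Rightarrow> nat \<Rightarrow> nat \<Rightarrow> nat" where
  "stirling2_R R n k = card {P. partition_on {1..n} P \<and> card P = k \<and> (\<forall>b\<in>P. card b \<in> R)}"

definition cyc_orbit :: "(nat \<Rightarrow> nat) \<Rightarrow> nat \<Rightarrow> nat set" where
  "cyc_orbit \<sigma> x = range (\<lambda>i. (\<sigma> ^^ i) x)"

text \<open>Partitions of [n] into k cycles (a permutation of [n] = a set of disjoint cycles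
  covering [n]), each cycle of size in R.\<close>
definition stirling1_R :: "nat set \<Rightarrow> nat \<Rightarrow> nat \<Rightarrow> nat" where
  "stirling1_R R n k = card {\<sigma>. \<sigma> permutes {1..n} \<and> card (cyc_orbit \<sigma> ` {1..n}) = k
       \<and> (\<forall>b \<in> cyc_orbit \<sigma> ` {1..n}. card b \<in> R)}"

definition lah_R :: "nat set \<Rightarrow> nat \<Rightarrow> nat \<Rightarrow> nat" where
  "lah_R R n k = card {Ls :: nat list set. finite Ls \<and> card Ls = k
       \<and> (\<forall>l\<in>Ls. l \<noteq> [] \<and> distinct l \<and> length l \<in> R)
       \<and> (\<forall>l\<in>Ls. \<forall>l'\<in>Ls. l \<noteq> l' \<longrightarrow> set l \<inter> set l' = {})
       \<and> (\<Union>l\<in>Ls. set l) = {1..n}}"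

definition lower_tri :: "(nat \<Rightarrow> nat \<Rightarrow> real) \<Rightarrow> bool" where
  "lower_tri M \<longleftrightarrow> (\<forall>n k. 1 \<le> n \<longrightarrow> n < k \<longrightarrow> M n k = 0)"

text \<open>B is a (two-sided) inverse of A in the algebra of lower triangular matrices indexed
  by n, k \<ge> 1; for lower triangular matrices the product sums are finite.\<close>
definition is_inverse_mat :: "(nat \<Rightarrow> nat \<Rightarrow> real) \<Rightarrow> (nat \<Rightarrow> nat \<Rightarrow> real) \<Rightarrow> bool" where
  "is_inverse_mat A B \<longleftrightarrow> lower_tri A \<and> lower_tri B
     \<and> (\<forall>n k. 1 \<le> n \<longrightarrow> 1 \<le> k \<longrightarrow> (\<Sum>j=1..n. A n j * B j k) = (if n = k then 1 else 0))
     \<and> (\<forall>n k. 1 \<le> n \<longrightarrow> 1 \<le> k \<longrightarrow> (\<Sum>j=1..n. B n j * A j k) = (if n = k then 1 else 0))"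

definition mat_invertible :: "(nat \<Rightarrow> nat \<Rightarrow> real) \<Rightarrow> bool" where
  "mat_invertible A \<longleftrightarrow> (\<exists>B. is_inverse_mat A B)"

datatype ptree = Leaf nat | Node "ptree list"

primrec leaves :: "ptree \<Rightarrow> nat list" where
  "leaves (Leaf i) = [i]"
| "leaves (Node ts) = concat (map leaves ts)"

primrec subtrees :: "ptree \<Rightarrow> ptree list" where
  "subtrees (Leaf i) = [Leaf i]"
| "subtrees (Node ts) = Node ts # concat (map subtrees ts)"

text \<open>Number of edges = sum of down-degrees.\<close>
primrec edges :: "ptree \<Rightarrow> nat" where
  "edges (Leaf i) = 0"
| "edges (Node ts) = length ts + sum_list (map edges ts)"

definition lmax :: "ptree \<Rightarrow> nat" where "lmax t = Max (set (leaves t))"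
definition lmin :: "ptree \<Rightarrow> nat" where "lmin t = Min (set (leaves t))"

text \<open>Phylogenetic condition (no internal vertex of down-degree 0 or 1) together with
  all nonzero down-degrees in R.\<close>
definition phylo_R :: "nat set \<Rightarrow> ptree \<Rightarrow> bool" where
  "phylo_R R t \<longleftrightarrow> (\<forall>ts. Node ts \<in> set (subtrees t) \<longrightarrow> 2 \<le> length ts \<and> length ts \<in> R)"

definition incr_ordered :: "ptree \<Rightarrow> bool" where
  "incr_ordered t \<longleftrightarrow> (\<forall>ts. Node ts \<in> set (subtrees t) \<longrightarrow> sorted_wrt (<) (map lmax ts))"

definition minfirst_ordered :: "ptree \<Rightarrow> bool" where
  "minfirst_ordered t \<longleftrightarrow> (\<forall>s ts. Node (s # ts) \<in> set (subtrees t) \<longrightarrow> (\<forall>s'\<in>set ts. lmin s < lmin s'))"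

text \<open>Linearly ordered phylogenetic forests with n leaves, k components, down-degrees in R:
  an unordered (finite) set of ordered trees whose leaves are bijectively labelled by [n].\<close>
definition lo_forests :: "nat set \<Rightarrow> nat \<Rightarrow> nat \<Rightarrow> ptree set set" where
  "lo_forests R n k = {F. finite F \<and> card F = k
      \<and> (\<forall>t\<in>F. phylo_R R t \<and> distinct (leaves t))
      \<and> (\<forall>t\<in>F. \<forall>t'\<in>F. t \<noteq> t' \<longrightarrow> set (leaves t) \<inter> set (leaves t') = {})
      \<and> (\<Union>t\<in>F. set (leaves t)) = {1..n}}"

definition io_forests :: "nat set \<Rightarrow> nat \<Rightarrow> nat \<Rightarrow> ptree set set" where
  "io_forests R n k = {F \<in> lo_forests R n k. \<forall>t\<in>F. incr_ordered t}"

definition mo_forests :: "nat set \<Rightarrow> nat \<Rightarrow> nat \<Rightarrow> ptree set set" where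
  "mo_forests R n k = {F \<in> lo_forests R n k. \<forall>t\<in>F. minfirst_ordered t}"

definition forest_edges :: "ptree set \<Rightarrow> nat" where
  "forest_edges F = (\<Sum>t\<in>F. edges t)"

definition even_minus_odd :: "ptree set set \<Rightarrow> real" where
  "even_minus_odd \<F> = real (card {F\<in>\<F>. even (forest_edges F)}) - real (card {F\<in>\<F>. odd (forest_edges F)})"

end

(*
  All three counting matrices count partitions of [n] into k lists with lengths in R: arbitrary
  lists (Lah numbers), increasing lists (set partitions) and lists starting with their least
  element (cycles). If 1 is not in R, the (1,1) entry vanishes and no inverse exists.

  If 1 is in R, multiplying the proposed inverse with the counting matrix gives a signed sum over
  pairs of an ordered phylogenetic forest on [n] and an arrangement of its trees into k lists.
  Grafting every list of length at least two under a new root turns such a pair bijectively into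
  an ordered forest with k trees together with a set of marked inner roots; summing (-1)^#marks
  over all markings cancels everything except the forest of n isolated leaves. Finally, a left
  inverse of a lower triangular matrix is a two-sided inverse, and inverses are unique.
*)

theory Submission
  imports Defs "HOL-Combinatorics.Cycles"
begin

section \<open>Lower triangular matrices\<close>

definition mat_mult :: "(nat \<Rightarrow> nat \<Rightarrow> real) \<Rightarrow> (nat \<Rightarrow> nat \<Rightarrow> real) \<Rightarrow> nat \<Rightarrow> nat \<Rightarrow> real" where
  "mat_mult X Y n k = (\<Sum>j=1..n. X n j * Y j k)"

lemma lower_tri_sum_extend:
  assumes "lower_tri X" "1 \<le> i" "i \<le> n"
  shows "(\<Sum>j=1..i. X i j * Y j k) = (\<Sum>j=1..n. X i j * Y j k)"
  by (rule sum.mono_neutral_left) (use assms in \<open>auto simp: lower_tri_def\<close>)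

lemma mat_mult_assoc:
  assumes "lower_tri Y"
  shows "mat_mult (mat_mult X Y) Z n k = mat_mult X (mat_mult Y Z) n k"
proof -
  have "mat_mult (mat_mult X Y) Z n k = (\<Sum>j=1..n. \<Sum>i=1..n. X n i * Y i j * Z j k)"
    unfolding mat_mult_def by (simp add: sum_distrib_right)
  also have "\<dots> = (\<Sum>i=1..n. \<Sum>j=1..n. X n i * Y i j * Z j k)" by (rule sum.swap)
  also have "\<dots> = (\<Sum>i=1..n. X n i * (\<Sum>j=1..i. Y i j * Z j k))"
  proof (rule sum.cong)
    fix i assume "i \<in> {1..n}"
    then show "(\<Sum>j=1..n. X n i * Y i j * Z j k) = X n i * (\<Sum>j=1..i. Y i j * Z j k)"
      using lower_tri_sum_extend[OF assms, of i n Z k]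
        by (simp add: sum_distrib_left[symmetric] mult.assoc)
  qed simp
  finally show ?thesis unfolding mat_mult_def .
qed

lemma mat_mult_delta_right:
  assumes "lower_tri C" "\<And>j. 1 \<le> j \<Longrightarrow> D j k = (if j = k then 1 else 0)" "1 \<le> n" "1 \<le> k"
  shows "mat_mult C D n k = C n k"
proof (cases "k \<le> n")
  case True
  have "mat_mult C D n k = (\<Sum>j\<in>{1..n}. if j = k then C n j else 0)"
    unfolding mat_mult_def by (rule sum.cong) (use assms in auto)
  then show ?thesis using True assms by (simp add: sum.delta)
next
  case False
  then show ?thesis
    using assms unfolding mat_mult_def lower_tri_def by (auto intro!: sum.neutral)
qed

lemma mat_mult_delta_left:
  assumes "\<And>j. 1 \<le> j \<Longrightarrow> D n j = (if n = j then 1 else 0)" "1 \<le> n"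
  shows "mat_mult D C n k = C n k"
proof -
  have "mat_mult D C n k = (\<Sum>j\<in>{1..n}. if j = n then C j k else 0)"
    unfolding mat_mult_def by (rule sum.cong) (use assms in auto)
  then show ?thesis using assms by (simp add: sum.delta)
qed

lemma mat_mult_diag:
  assumes "lower_tri A" "1 \<le> n"
  shows "mat_mult C A n n = C n n * A n n"
proof -
  have "mat_mult C A n n = (\<Sum>j\<in>{1..n}. if j = n then C n j * A j n else 0)"
    unfolding mat_mult_def by (rule sum.cong) (use assms in \<open>auto simp: lower_tri_def\<close>)
  then show ?thesis using assms by (simp add: sum.delta)
qed

text \<open>A left inverse is a right inverse: row \<open>n\<close> of \<open>A C - 1\<close> vanishes by strong induction
  on \<open>n\<close>, since \<open>C (A C - 1) = 0\<close> and \<open>C\<close> is triangular with invertible diagonal.\<close>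

lemma left_inverse_imp_is_inverse_mat:
  assumes A: "lower_tri A" and C: "lower_tri C"
    and left: "\<And>n k. 1 \<le> n \<Longrightarrow> 1 \<le> k \<Longrightarrow> mat_mult C A n k = (if n = k then 1 else 0)"
  shows "is_inverse_mat A C"
proof -
  define E where "E n k = mat_mult A C n k - (if n = k then 1 else 0)" for n k
  have "E n k = 0" if "1 \<le> n" "1 \<le> k" for n k
    using that
  proof (induction n arbitrary: k rule: less_induct)
    case (less n)
    have "mat_mult C (mat_mult A C) n k = mat_mult (mat_mult C A) C n k"
      using mat_mult_assoc[OF A] by simp
    also have "\<dots> = C n k" by (rule mat_mult_delta_left) (use left less.prems in auto)
    finally have "mat_mult C (mat_mult A C) n k = C n k" .
    moreover have "mat_mult C (mat_mult A C) n k
        = mat_mult C E n k + mat_mult C (\<lambda>j k. if j = k then 1 else 0) n k"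
      unfolding mat_mult_def E_def by (simp add: sum.distrib[symmetric] algebra_simps)
    moreover have "mat_mult C (\<lambda>j k. if j = k then 1 else 0) n k = C n k"
      by (rule mat_mult_delta_right) (use C less.prems in auto)
    moreover have "mat_mult C E n k = (\<Sum>j\<in>{1..n}. if j = n then C n j * E j k else 0)"
      unfolding mat_mult_def by (rule sum.cong) (use less in auto)
    moreover have "C n n * A n n = 1"
      using mat_mult_diag[OF A less.prems(1), of C] left[OF less.prems(1,1)] by simp
    ultimately show ?case using less.prems
      by (simp add: sum.delta, metis mult_zero_left zero_neq_one)
  qed
  then show ?thesis
    using A C left unfolding is_inverse_mat_def E_def mat_mult_def by auto
qed

lemma is_inverse_mat_unique:
  assumes "is_inverse_mat A B" "lower_tri C"
    and left: "\<And>n k. 1 \<le> n \<Longrightarrow> 1 \<le> k \<Longrightarrow> mat_mult C A n k = (if n = k then 1 else 0)"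
    and "1 \<le> n" "1 \<le> k"
  shows "B n k = C n k"
proof -
  have A: "lower_tri A"
    and right: "\<And>n k. 1 \<le> n \<Longrightarrow> 1 \<le> k \<Longrightarrow> mat_mult A B n k = (if n = k then 1 else 0)"
    using assms(1) unfolding is_inverse_mat_def mat_mult_def by auto
  have "C n k = mat_mult C (mat_mult A B) n k"
    by (rule mat_mult_delta_right[symmetric]) (use assms right in auto)
  also have "\<dots> = mat_mult (mat_mult C A) B n k" using mat_mult_assoc[OF A] by simp
  also have "\<dots> = B n k" by (rule mat_mult_delta_left) (use left assms in auto)
  finally show ?thesis by simp
qed

section \<open>Set partitions into lists\<close>

datatype block_order = Unordered | Increasing | Min_first

fun block_ordered :: "block_order \<Rightarrow> ('a \<Rightarrow> 'a \<Rightarrow> bool) \<Rightarrow> 'a list \<Rightarrow> bool" where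
  "block_ordered Unordered lt l = True"
| "block_ordered Increasing lt l = sorted_wrt lt l"
| "block_ordered Min_first lt l = (\<forall>x\<in>set (tl l). lt (hd l) x)"

text \<open>Unordered lists give the Lah numbers, increasing lists the set partitions and min-first
  lists the cycle decompositions (a cycle written starting from its least element).\<close>

definition list_partitions ::
    "block_order \<Rightarrow> ('a \<Rightarrow> 'a \<Rightarrow> bool) \<Rightarrow> nat set \<Rightarrow> 'a set \<Rightarrow> nat \<Rightarrow> 'a list set set" where
  "list_partitions ord lt R X k = {Ls. finite Ls \<and> card Ls = k
       \<and> (\<forall>l\<in>Ls. l \<noteq> [] \<and> distinct l \<and> length l \<in> R \<and> block_ordered ord lt l)
       \<and> (\<forall>l\<in>Ls. \<forall>l'\<in>Ls. l \<noteq> l' \<longrightarrow> set l \<inter> set l' = {})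
       \<and> (\<Union>l\<in>Ls. set l) = X}"

lemma list_partitionsD:
  assumes "Ls \<in> list_partitions ord lt R X k"
  shows "finite Ls" "card Ls = k"
    "\<And>l. l \<in> Ls \<Longrightarrow> l \<noteq> [] \<and> distinct l \<and> length l \<in> R \<and> block_ordered ord lt l"
    "\<And>l l'. l \<in> Ls \<Longrightarrow> l' \<in> Ls \<Longrightarrow> l \<noteq> l' \<Longrightarrow> set l \<inter> set l' = {}"
    "(\<Union>l\<in>Ls. set l) = X"
  using assms unfolding list_partitions_def by auto

lemma finite_list_partitions:
  assumes "finite X"
  shows "finite (list_partitions ord lt R X k)"
proof -
  have "list_partitions ord lt R X k \<subseteq> Pow {l. set l \<subseteq> X \<and> distinct l}"
    unfolding list_partitions_def by auto
  then show ?thesis using finite_subset_distinct[OF assms] finite_subset by blast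
qed

lemma inj_on_set_list_partition:
  assumes "Ls \<in> list_partitions ord lt R X k"
  shows "inj_on set Ls"
  using list_partitionsD(3,4)[OF assms] by (intro inj_onI) (metis Int_absorb set_empty)

lemma list_partition_card_le:
  assumes Ls: "Ls \<in> list_partitions ord lt R X k" and "finite X"
  shows "k \<le> card X"
proof -
  note P = list_partitionsD[OF Ls]
  have "inj_on hd Ls"
    using P(3,4) by (intro inj_onI) (metis disjoint_iff list.set_sel(1))
  moreover have "hd ` Ls \<subseteq> X"
    using P(3,5) by (auto intro: list.set_sel(1))
  ultimately show ?thesis using card_inj_on_le assms(2) P(2) by blast
qed

lemma card_eq_sum_length_list_partition:
  assumes "Ls \<in> list_partitions ord lt R X k"
  shows "card X = (\<Sum>l\<in>Ls. length l)"
proof -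
  note P = list_partitionsD[OF assms]
  have "card X = (\<Sum>l\<in>Ls. card (set l))"
    unfolding P(5)[symmetric] by (rule card_UN_disjoint) (use P(1,4) in auto)
  also have "\<dots> = (\<Sum>l\<in>Ls. length l)" using P(3) by (simp add: distinct_card)
  finally show ?thesis .
qed

lemma list_partitions_singleton:
  assumes "1 \<notin> R"
  shows "list_partitions ord lt R {x} k = {}"
proof (rule equals0I)
  fix Ls assume Ls: "Ls \<in> list_partitions ord lt R {x} k"
  note P = list_partitionsD[OF Ls]
  obtain l where l: "l \<in> Ls" "x \<in> set l" using P(5) by blast
  then have "set l = {x}" using P(5) by blast
  then have "length l = 1" using P(3)[OF l(1)] distinct_card[of l] by simp
  then show False using P(3)[OF l(1)] assms by simp
qed

lemma block_ordered_map:
  assumes "\<forall>x\<in>set l. \<forall>y\<in>set l. lt x y \<longleftrightarrow> lt' (h x) (h y)"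
  shows "block_ordered ord lt' (map h l) = block_ordered ord lt l"
proof (cases ord)
  case Increasing
  have "sorted_wrt (\<lambda>x y. lt' (h x) (h y)) l = sorted_wrt lt l"
    using assms by (induction l) auto
  then show ?thesis using Increasing by (simp add: sorted_wrt_map)
qed (use assms in \<open>cases l; auto\<close>)+

lemma list_partitions_map:
  assumes inj: "inj_on h X" and lt: "\<forall>x\<in>X. \<forall>y\<in>X. lt x y \<longleftrightarrow> lt' (h x) (h y)"
    and Ls: "Ls \<in> list_partitions ord lt R X k"
  shows "map h ` Ls \<in> list_partitions ord lt' R (h ` X) k"
proof -
  note P = list_partitionsD[OF Ls]
  have sub: "set l \<subseteq> X" if "l \<in> Ls" for l using P(5) that by auto
  have inj_l: "inj_on h (set l \<union> set l')" if "l \<in> Ls" "l' \<in> Ls" for l l'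
    using inj sub[OF that(1)] sub[OF that(2)] by (meson Un_least inj_on_subset)
  have injm: "inj_on (map h) Ls"
    by (rule inj_onI) (use inj_l inj_on_map_eq_map in blast)
  show ?thesis unfolding list_partitions_def
  proof (intro CollectI conjI ballI impI)
    show "finite (map h ` Ls)" "card (map h ` Ls) = k"
      using P(1,2) card_image[OF injm] by simp_all
    show "(\<Union>l\<in>map h ` Ls. set l) = h ` X" using P(5) by auto
  next
    fix l' assume "l' \<in> map h ` Ls"
    then obtain l where l: "l \<in> Ls" "l' = map h l" by auto
    have "\<forall>x\<in>set l. \<forall>y\<in>set l. lt x y \<longleftrightarrow> lt' (h x) (h y)" using lt sub[OF l(1)] by blast
    then show "l' \<noteq> []" "distinct l'" "length l' \<in> R" "block_ordered ord lt' l'"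
      using P(3)[OF l(1)] l(2) inj_l[OF l(1) l(1)] block_ordered_map[of l lt lt' h ord]
      by (simp_all add: distinct_map)
  next
    fix l1 l2 assume "l1 \<in> map h ` Ls" "l2 \<in> map h ` Ls" "l1 \<noteq> l2"
    then obtain m1 m2 where m: "m1 \<in> Ls" "m2 \<in> Ls" "l1 = map h m1" "l2 = map h m2" "m1 \<noteq> m2"
      by auto
    then have "h ` (set m1 \<inter> set m2) = {}" using P(4) by simp
    then show "set l1 \<inter> set l2 = {}"
      using inj_on_image_Int[OF inj sub[OF m(1)] sub[OF m(2)]] m(3,4) by simp
  qed
qed

lemma card_list_partitions_bij_betw:
  assumes bij: "bij_betw h X Y" and lt: "\<forall>x\<in>X. \<forall>y\<in>X. lt x y \<longleftrightarrow> lt' (h x) (h y)"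
  shows "card (list_partitions ord lt R X k) = card (list_partitions ord lt' R Y k)"
proof -
  define g where "g = inv_into X h"
  have bg: "bij_betw g Y X" unfolding g_def by (rule bij_betw_inv_into[OF bij])
  have gh: "g (h x) = x" if "x \<in> X" for x
    using bij that unfolding g_def by (simp add: bij_betw_inv_into_left)
  have hg: "h (g y) = y" if "y \<in> Y" for y
    using bij that unfolding g_def by (simp add: bij_betw_inv_into_right)
  have lt': "\<forall>x\<in>Y. \<forall>y\<in>Y. lt' x y \<longleftrightarrow> lt (g x) (g y)"
    using lt hg bg by (metis bij_betwE)
  have images: "h ` X = Y" "g ` Y = X" using bij bg by (auto simp: bij_betw_def)
  have map_inverse: "map f' ` map f ` Ls = Ls"
    if "Ls \<in> list_partitions ord lt'' R Z k" "\<And>z. z \<in> Z \<Longrightarrow> f' (f z) = z"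
    for Ls lt'' Z f f'
  proof -
    have "map f' (map f l) = l" if "l \<in> Ls" for l
      unfolding map_map
      by (rule map_idI) (use list_partitionsD(5)[OF \<open>Ls \<in> _\<close>] that
          \<open>\<And>z. z \<in> Z \<Longrightarrow> f' (f z) = z\<close> in auto)
    then show ?thesis by (force simp: image_image)
  qed
  show ?thesis
  proof (rule bij_betw_same_card, rule bij_betw_byWitness[where f'="image (map g)"])
    show "\<forall>Ls\<in>list_partitions ord lt R X k. map g ` map h ` Ls = Ls"
      using map_inverse gh by blast
    show "\<forall>Ls\<in>list_partitions ord lt' R Y k. map h ` map g ` Ls = Ls"
      using map_inverse hg by blast
    show "image (map h) ` list_partitions ord lt R X k \<subseteq> list_partitions ord lt' R Y k"
      using list_partitions_map[OF bij_betw_imp_inj_on[OF bij] lt] images by auto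
    show "image (map g) ` list_partitions ord lt' R Y k \<subseteq> list_partitions ord lt R X k"
      using list_partitions_map[OF bij_betw_imp_inj_on[OF bg] lt'] images by auto
  qed
qed

lemma lah_R_eq_card_list_partitions:
  "lah_R R n k = card (list_partitions Unordered (<) R {1..n} k)"
  unfolding lah_R_def list_partitions_def by simp

lemma list_partition_blocks:
  assumes Ls: "Ls \<in> list_partitions ord lt R X k"
  shows "partition_on X (set ` Ls)" "card (set ` Ls) = k" "\<forall>b\<in>set ` Ls. card b \<in> R"
proof -
  note P = list_partitionsD[OF Ls]
  show "partition_on X (set ` Ls)"
    using P(3-5) by (intro partition_onI) (auto simp: disjnt_def)
  show "card (set ` Ls) = k" using card_image[OF inj_on_set_list_partition[OF Ls]] P(2) by simp
  show "\<forall>b\<in>set ` Ls. card b \<in> R" using P(3) by (auto simp: distinct_card)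
qed

lemma sorted_lists_of_partition:
  fixes X :: "'a :: linorder set"
  assumes P: "partition_on X P" and "finite X" "card P = k" "\<forall>b\<in>P. card b \<in> R"
  shows "sorted_list_of_set ` P \<in> list_partitions Increasing (<) R X k"
proof -
  have blocks: "finite b" "b \<noteq> {}" if "b \<in> P" for b
    using P that finite_subset[OF _ \<open>finite X\<close>] by (auto dest: partition_onD1 partition_onD3)
  have inj: "inj_on sorted_list_of_set P"
    using blocks by (intro inj_onI) (metis sorted_list_of_set.set_sorted_key_list_of_set)
  have "finite P" using finite_elements[OF \<open>finite X\<close> P] .
  then show ?thesis
    unfolding list_partitions_def using assms blocks card_image[OF inj]
    by (auto simp: partition_on_def disjoint_def) (metis IntI empty_iff)
qed

lemma stirling2_R_eq_card_list_partitions: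
  "stirling2_R R n k = card (list_partitions Increasing (<) R {1..n} k)"
  unfolding stirling2_R_def
proof (rule bij_betw_same_card, rule bij_betw_byWitness[where f'="image set"])
  let ?P = "{P. partition_on {1..n} P \<and> card P = k \<and> (\<forall>b\<in>P. card b \<in> R)}"
  show "\<forall>P\<in>?P. set ` sorted_list_of_set ` P = P"
  proof
    fix P assume "P \<in> ?P"
    then have "\<forall>b\<in>P. finite b" using finite_subset[of _ "{1..n}"] by (auto dest!: partition_onD1)
    then show "set ` sorted_list_of_set ` P = P" by (force simp: image_image)
  qed
  show "\<forall>Ls\<in>list_partitions Increasing (<) R {1..n} k. sorted_list_of_set ` set ` Ls = Ls"
  proof
    fix Ls assume Ls: "Ls \<in> list_partitions Increasing (<) R {1..n} k"
    have "sorted_list_of_set (set l) = l" if "l \<in> Ls" for l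
      using list_partitionsD(3)[OF Ls that] by (simp add: sorted_list_of_set_sort_remdups
          strict_sorted_iff distinct_remdups_id sorted_sort_id)
    then show "sorted_list_of_set ` set ` Ls = Ls" by (force simp: image_image)
  qed
  show "image sorted_list_of_set ` ?P \<subseteq> list_partitions Increasing (<) R {1..n} k"
    using sorted_lists_of_partition[of "{1..n}"] by auto
  show "image set ` list_partitions Increasing (<) R {1..n} k \<subseteq> ?P"
    using list_partition_blocks by blast
qed

section \<open>Permutations as sets of cycle lists\<close>

lemma cyc_orbit_self: "x \<in> cyc_orbit \<sigma> x"
  unfolding cyc_orbit_def by (metis funpow_0 rangeI)

lemma cyc_orbit_subset:
  assumes "\<sigma> permutes S" "x \<in> S"
  shows "cyc_orbit \<sigma> x \<subseteq> S"
  unfolding cyc_orbit_def using permutes_in_image[OF permutes_funpow[OF assms(1)]] assms(2) by blast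

context
  fixes \<sigma> :: "nat \<Rightarrow> nat"
  assumes perm: "permutation \<sigma>"
begin

lemma cyc_orbit_eq_set_support: "cyc_orbit \<sigma> x = set (support \<sigma> x)"
  unfolding cyc_orbit_def using support_set[OF perm] by simp

lemma cyc_orbit_eq:
  assumes "y \<in> cyc_orbit \<sigma> x"
  shows "cyc_orbit \<sigma> y = cyc_orbit \<sigma> x"
proof (rule ccontr)
  assume ne: "cyc_orbit \<sigma> y \<noteq> cyc_orbit \<sigma> x"
  have "disjoint (range (\<lambda>a. set (support \<sigma> a)))" by (rule disjoint_support[OF perm])
  then have "set (support \<sigma> y) \<inter> set (support \<sigma> x) = {}"
    using ne unfolding cyc_orbit_eq_set_support disjoint_def by blast
  then show False using assms cyc_orbit_self[of y \<sigma>] unfolding cyc_orbit_eq_set_support by blast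
qed

lemma cyc_orbits_disjoint:
  "cyc_orbit \<sigma> x \<noteq> cyc_orbit \<sigma> y \<Longrightarrow> cyc_orbit \<sigma> x \<inter> cyc_orbit \<sigma> y = {}"
  using cyc_orbit_eq by blast

lemma hd_support: "hd (support \<sigma> x) = x"
  using least_power_of_permutation(2)[OF perm, of x] by (simp add: upt_conv_Cons)

lemma support_ne_Nil: "support \<sigma> x \<noteq> []"
  using least_power_of_permutation(2)[OF perm, of x] by simp

end

definition cycle_lists :: "nat set \<Rightarrow> (nat \<Rightarrow> nat) \<Rightarrow> nat list set" where
  "cycle_lists S \<sigma> = (\<lambda>c. support \<sigma> (Min c)) ` cyc_orbit \<sigma> ` S"

lemma support_Min_cyc_orbit:
  assumes perm: "\<sigma> permutes S" and "finite S" "x \<in> S"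
  defines "c \<equiv> cyc_orbit \<sigma> x"
  shows "set (support \<sigma> (Min c)) = c" "block_ordered Min_first (<) (support \<sigma> (Min c))"
proof -
  have permutation: "permutation \<sigma>" using perm \<open>finite S\<close> permutation_permutes by blast
  have "finite c" unfolding c_def using finite_subset[OF cyc_orbit_subset[OF perm \<open>x \<in> S\<close>]] assms
    by simp
  moreover have "Min c \<in> c" using calculation cyc_orbit_self[of x \<sigma>] unfolding c_def
    by (intro Min_in) auto
  moreover have "cyc_orbit \<sigma> (Min c) = c" using calculation(2) cyc_orbit_eq[OF permutation]
    unfolding c_def by blast
  ultimately have "finite c" and c: "set (support \<sigma> (Min c)) = c"
    using cyc_orbit_eq_set_support[OF permutation] by simp_all
  then show "set (support \<sigma> (Min c)) = c" by simp
  have "distinct (support \<sigma> (Min c))" "support \<sigma> (Min c) \<noteq> []" "hd (support \<sigma> (Min c)) = Min c"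
    using cycle_of_permutation[OF permutation] support_ne_Nil[OF permutation]
      hd_support[OF permutation] by simp_all
  moreover have "y \<in> c" if "y \<in> set (tl (support \<sigma> (Min c)))" for y
    using c that list.set_sel(2)[OF \<open>support \<sigma> (Min c) \<noteq> []\<close>] by blast
  ultimately show "block_ordered Min_first (<) (support \<sigma> (Min c))"
    using Min_le[OF \<open>finite c\<close>] by (cases "support \<sigma> (Min c)") (auto intro: le_neq_trans)
qed

lemma cycle_lists_in_list_partitions:
  assumes perm: "\<sigma> permutes S" and "finite S"
    and k: "card (cyc_orbit \<sigma> ` S) = k" and R: "\<forall>b\<in>cyc_orbit \<sigma> ` S. card b \<in> R"
  shows "cycle_lists S \<sigma> \<in> list_partitions Min_first (<) R S k"
proof -
  have permutation: "permutation \<sigma>" using perm \<open>finite S\<close> permutation_permutes by blast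
  define f where "f c = support \<sigma> (Min c)" for c
  note f_props = support_Min_cyc_orbit[OF perm \<open>finite S\<close>, folded f_def]
  have inj: "inj_on f (cyc_orbit \<sigma> ` S)"
    using f_props(1) by (intro inj_on_inverseI[where g=set]) auto
  have "(\<Union>c\<in>cyc_orbit \<sigma> ` S. c) = S"
    using cyc_orbit_self[of _ \<sigma>] cyc_orbit_subset[OF perm] by blast
  then have covers: "(\<Union>l\<in>f ` cyc_orbit \<sigma> ` S. set l) = S" using f_props(1) by simp
  have "cycle_lists S \<sigma> = f ` cyc_orbit \<sigma> ` S" by (simp add: cycle_lists_def f_def)
  also have "\<dots> \<in> list_partitions Min_first (<) R S k"
    unfolding list_partitions_def
  proof (intro CollectI conjI ballI impI covers)
    show "finite (f ` cyc_orbit \<sigma> ` S)" using \<open>finite S\<close> by simp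
    show "card (f ` cyc_orbit \<sigma> ` S) = k" using card_image[OF inj] k by simp
  next
    fix l assume "l \<in> f ` cyc_orbit \<sigma> ` S"
    then obtain x where x: "x \<in> S" "l = f (cyc_orbit \<sigma> x)" by blast
    show "l \<noteq> []" "distinct l"
      using x support_ne_Nil[OF permutation] cycle_of_permutation[OF permutation]
      unfolding f_def by simp_all
    then show "length l \<in> R" using R x f_props(1)[OF x(1)] distinct_card[of l] by auto
    show "block_ordered Min_first (<) l" using f_props(2)[OF x(1)] x(2) by simp
  next
    fix l l' assume "l \<in> f ` cyc_orbit \<sigma> ` S" "l' \<in> f ` cyc_orbit \<sigma> ` S" "l \<noteq> l'"
    then obtain x x' where "x \<in> S" "x' \<in> S" "l = f (cyc_orbit \<sigma> x)" "l' = f (cyc_orbit \<sigma> x')"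
      by blast
    moreover have "cyc_orbit \<sigma> x \<noteq> cyc_orbit \<sigma> x'" using calculation \<open>l \<noteq> l'\<close> by auto
    ultimately show "set l \<inter> set l' = {}"
      using f_props(1) cyc_orbits_disjoint[OF permutation, of x x'] by simp
  qed
  finally show ?thesis .
qed

lemma cycle_lists_inj:
  assumes "\<sigma> permutes S" "\<tau> permutes S" "finite S" "cycle_lists S \<sigma> = cycle_lists S \<tau>"
  shows "\<sigma> = \<tau>"
proof
  fix x
  show "\<sigma> x = \<tau> x"
  proof (cases "x \<in> S")
    case False then show ?thesis using assms(1,2) by (simp add: permutes_not_in)
  next
    case True
    have perms: "permutation \<sigma>" "permutation \<tau>"
      using assms(1-3) permutation_permutes by blast+
    define l where "l = support \<sigma> (Min (cyc_orbit \<sigma> x))"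
    have x: "x \<in> set l"
      using support_Min_cyc_orbit(1)[OF assms(1,3) True] cyc_orbit_self unfolding l_def by simp
    have "l \<in> cycle_lists S \<tau>" using assms(4) True unfolding cycle_lists_def l_def by auto
    then obtain y where "l = support \<tau> y" unfolding cycle_lists_def by auto
    then show ?thesis
      using cycle_restrict[OF perms(1) x[unfolded l_def]] cycle_restrict[OF perms(2)] x
      unfolding l_def by simp
  qed
qed

definition perm_of_lists :: "'a list set \<Rightarrow> 'a \<Rightarrow> 'a" where
  "perm_of_lists Ls x =
     (if \<exists>l\<in>Ls. x \<in> set l then cycle_of_list (THE l. l \<in> Ls \<and> x \<in> set l) x else x)"

lemma funpow_cycle_of_list_nth:
  assumes "distinct l" "j < length l"
  shows "(cycle_of_list l ^^ i) (l ! j) = l ! ((i + j) mod length l)"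
proof -
  have "(cycle_of_list l ^^ i) (l ! j) = rotate i l ! j"
    using arg_cong[OF cyclic_rotation[OF assms(1)], of "\<lambda>xs. xs ! j"] assms(2) by simp
  then show ?thesis using assms(2) by (simp add: nth_rotate)
qed

context
  fixes Ls :: "nat list set" and ord lt R X k
  assumes Ls: "Ls \<in> list_partitions ord lt R X k"
begin

lemma perm_of_lists_eq:
  assumes "l \<in> Ls" "x \<in> set l"
  shows "perm_of_lists Ls x = cycle_of_list l x"
proof -
  have "(THE l. l \<in> Ls \<and> x \<in> set l) = l"
    using assms list_partitionsD(4)[OF Ls] by (intro the_equality) blast+
  then show ?thesis unfolding perm_of_lists_def using assms by auto
qed

lemma funpow_perm_of_lists_nth:
  assumes "l \<in> Ls" "j < length l"
  shows "(perm_of_lists Ls ^^ i) (l ! j) = l ! ((i + j) mod length l)"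
proof -
  have "(perm_of_lists Ls ^^ i) x = (cycle_of_list l ^^ i) x" if "x \<in> set l" for x
  proof (induction i)
    case (Suc i)
    have "(cycle_of_list l ^^ i) x \<in> set l"
      using that by (simp add: permutes_in_image[OF permutes_funpow[OF cycle_permutes]])
    then show ?case using Suc perm_of_lists_eq[OF assms(1)] by simp
  qed simp
  moreover have "distinct l" using list_partitionsD(3)[OF Ls assms(1)] by simp
  ultimately show ?thesis using funpow_cycle_of_list_nth assms(2) by simp
qed

lemma cyc_orbit_perm_of_lists:
  assumes l: "l \<in> Ls" and x: "x \<in> set l"
  shows "cyc_orbit (perm_of_lists Ls) x = set l"
proof
  obtain j where j: "j < length l" "x = l ! j" using x by (auto simp: in_set_conv_nth)
  show "cyc_orbit (perm_of_lists Ls) x \<subseteq> set l"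
    unfolding cyc_orbit_def using funpow_perm_of_lists_nth[OF l j(1)] j
    by (auto intro!: nth_mem mod_less_divisor)
  show "set l \<subseteq> cyc_orbit (perm_of_lists Ls) x"
  proof
    fix y assume "y \<in> set l"
    then obtain t where t: "t < length l" "y = l ! t" by (auto simp: in_set_conv_nth)
    have "(perm_of_lists Ls ^^ (t + length l - j)) x = y"
      using funpow_perm_of_lists_nth[OF l j(1)] j t by simp
    then show "y \<in> cyc_orbit (perm_of_lists Ls) x" unfolding cyc_orbit_def
      by (rule range_eqI[OF sym])
  qed
qed

lemma perm_of_lists_permutes: "perm_of_lists Ls permutes X"
proof (rule bij_imp_permutes)
  note P = list_partitionsD[OF Ls]
  have maps_to: "perm_of_lists Ls x \<in> set l" if "l \<in> Ls" "x \<in> set l" for l x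
    using perm_of_lists_eq[OF that] that(2) by (simp add: permutes_in_image[OF cycle_permutes])
  have inj: "inj_on (perm_of_lists Ls) X"
  proof (rule inj_onI)
    fix x y assume "x \<in> X" "y \<in> X" and eq: "perm_of_lists Ls x = perm_of_lists Ls y"
    then obtain l l' where l: "l \<in> Ls" "x \<in> set l" and l': "l' \<in> Ls" "y \<in> set l'"
      using P(5) by blast
    have "perm_of_lists Ls x \<in> set l" "perm_of_lists Ls y \<in> set l'"
      using maps_to[OF l] maps_to[OF l'] .
    then have "l = l'" using P(4)[OF l(1) l'(1)] eq by auto
    then have "cycle_of_list l x = cycle_of_list l y"
      using eq perm_of_lists_eq[OF l] perm_of_lists_eq[OF l'] by simp
    then show "x = y"
      by (rule injD[OF bij_is_inj[OF permutation_bijective[OF permutation_of_cycle]]])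
  qed
  have into: "perm_of_lists Ls ` X \<subseteq> X" using maps_to P(5) by fastforce
  have "finite X" using P(1,5) by (metis finite_UN_I finite_set)
  then show "bij_betw (perm_of_lists Ls) X X"
    unfolding bij_betw_def using inj endo_inj_surj[OF _ into inj] by blast
  show "perm_of_lists Ls x = x" if "x \<notin> X" for x
    using that P(5) unfolding perm_of_lists_def by auto
qed

lemma support_perm_of_lists:
  assumes l: "l \<in> Ls"
  shows "support (perm_of_lists Ls) (hd l) = l"
proof -
  define n where "n = length l"
  have l_props: "l \<noteq> []" "distinct l" using list_partitionsD(3)[OF Ls l] by simp_all
  then have n: "n > 0" and hd: "hd l = l ! 0" unfolding n_def by (simp_all add: hd_conv_nth)
  have iter: "(perm_of_lists Ls ^^ i) (hd l) = l ! (i mod n)" for i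
    using funpow_perm_of_lists_nth[OF l, of 0 i] n hd unfolding n_def by simp
  have "least_power (perm_of_lists Ls) (hd l) = n"
    unfolding least_power_def
  proof (rule Least_equality)
    show "(perm_of_lists Ls ^^ n) (hd l) = hd l \<and> n > 0" using iter[of n] n hd by simp
    fix m assume m: "(perm_of_lists Ls ^^ m) (hd l) = hd l \<and> m > 0"
    then have "m mod n = 0"
      using iter hd nth_eq_iff_index_eq[OF l_props(2)] n unfolding n_def by simp
    then show "n \<le> m" using m by (metis mod_less not_le not_less0)
  qed
  then have "support (perm_of_lists Ls) (hd l) = map (\<lambda>i. l ! i) [0..<n]"
    using iter by simp
  then show ?thesis unfolding n_def by (simp add: map_nth)
qed

lemma cyc_orbits_perm_of_lists: "cyc_orbit (perm_of_lists Ls) ` X = set ` Ls"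
proof (intro equalityI subsetI)
  fix b assume "b \<in> cyc_orbit (perm_of_lists Ls) ` X"
  then show "b \<in> set ` Ls" using list_partitionsD(5)[OF Ls] cyc_orbit_perm_of_lists by auto
next
  fix b assume "b \<in> set ` Ls"
  then obtain l where l: "l \<in> Ls" "b = set l" by blast
  then have "hd l \<in> set l" using list_partitionsD(3)[OF Ls l(1)] by simp
  then show "b \<in> cyc_orbit (perm_of_lists Ls) ` X"
    using cyc_orbit_perm_of_lists[OF l(1)] l list_partitionsD(5)[OF Ls] by blast
qed

end

lemma cycle_lists_perm_of_lists:
  assumes Ls: "Ls \<in> list_partitions Min_first (<) R S k"
  shows "cycle_lists S (perm_of_lists Ls) = Ls"
proof -
  note P = list_partitionsD[OF Ls]
  have "Min (set l) = hd l" if "l \<in> Ls" for l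
    using P(3)[OF that] by (cases l) (auto intro!: Min_eqI simp: less_imp_le)
  then show ?thesis
    unfolding cycle_lists_def cyc_orbits_perm_of_lists[OF Ls] image_image
    using support_perm_of_lists[OF Ls] by simp
qed

lemma stirling1_R_eq_card_list_partitions:
  "stirling1_R R n k = card (list_partitions Min_first (<) R {1..n} k)"
proof -
  let ?perms = "{\<sigma>. \<sigma> permutes {1..n} \<and> card (cyc_orbit \<sigma> ` {1..n}) = k
       \<and> (\<forall>b \<in> cyc_orbit \<sigma> ` {1..n}. card b \<in> R)}"
  have "bij_betw (cycle_lists {1..n}) ?perms (list_partitions Min_first (<) R {1..n} k)"
  proof (rule bij_betw_imageI)
    show "inj_on (cycle_lists {1..n}) ?perms"
      by (intro inj_onI, rule cycle_lists_inj[where S="{1..n}"]) auto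
    show "cycle_lists {1..n} ` ?perms = list_partitions Min_first (<) R {1..n} k"
    proof (intro equalityI subsetI)
      fix Ls assume Ls: "Ls \<in> list_partitions Min_first (<) R {1..n} k"
      have "perm_of_lists Ls \<in> ?perms"
        unfolding mem_Collect_eq cyc_orbits_perm_of_lists[OF Ls]
        using perm_of_lists_permutes[OF Ls] list_partition_blocks(2,3)[OF Ls] by blast
      then have "cycle_lists {1..n} (perm_of_lists Ls) \<in> cycle_lists {1..n} ` ?perms"
        by (rule imageI)
      then show "Ls \<in> cycle_lists {1..n} ` ?perms" unfolding cycle_lists_perm_of_lists[OF Ls] .
    qed (use cycle_lists_in_list_partitions in auto)
  qed
  then show ?thesis unfolding stirling1_R_def by (rule bij_betw_same_card)
qed

section \<open>Ordered phylogenetic forests\<close>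

text \<open>Siblings are compared by their largest leaf, except in min-first order where the
  smallest leaf is used; for unordered forests the key only serves to enumerate the trees of a
  forest in a fixed order.\<close>

fun tree_key :: "block_order \<Rightarrow> ptree \<Rightarrow> nat" where
  "tree_key Min_first t = lmin t"
| "tree_key _ t = lmax t"

definition key_less :: "block_order \<Rightarrow> ptree \<Rightarrow> ptree \<Rightarrow> bool" where
  "key_less ord s t \<longleftrightarrow> tree_key ord s < tree_key ord t"

definition ordered_tree :: "block_order \<Rightarrow> nat set \<Rightarrow> ptree \<Rightarrow> bool" where
  "ordered_tree ord R t \<longleftrightarrow> phylo_R R t \<and> distinct (leaves t)
     \<and> (\<forall>ts. Node ts \<in> set (subtrees t) \<longrightarrow> block_ordered ord (key_less ord) ts)"

definition ordered_forests :: "block_order \<Rightarrow> nat set \<Rightarrow> nat set \<Rightarrow> nat \<Rightarrow> ptree set set" where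
  "ordered_forests ord R S k = {F. finite F \<and> card F = k \<and> (\<forall>t\<in>F. ordered_tree ord R t)
      \<and> (\<forall>t\<in>F. \<forall>t'\<in>F. t \<noteq> t' \<longrightarrow> set (leaves t) \<inter> set (leaves t') = {})
      \<and> (\<Union>t\<in>F. set (leaves t)) = S}"

lemma ordered_forestsD:
  assumes "F \<in> ordered_forests ord R S k"
  shows "finite F" "card F = k" "\<And>t. t \<in> F \<Longrightarrow> ordered_tree ord R t"
    "\<And>t t'. t \<in> F \<Longrightarrow> t' \<in> F \<Longrightarrow> t \<noteq> t' \<Longrightarrow> set (leaves t) \<inter> set (leaves t') = {}"
    "(\<Union>t\<in>F. set (leaves t)) = S"
  using assms unfolding ordered_forests_def by auto

lemma lo_forests_eq: "lo_forests R n k = ordered_forests Unordered R {1..n} k"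
  unfolding lo_forests_def ordered_forests_def ordered_tree_def by simp

lemma io_forests_eq: "io_forests R n k = ordered_forests Increasing R {1..n} k"
proof -
  have "block_ordered Increasing (key_less Increasing) ts \<longleftrightarrow> sorted_wrt (<) (map lmax ts)" for ts
    by (simp add: key_less_def[abs_def] sorted_wrt_map)
  then show ?thesis
    unfolding io_forests_def lo_forests_def ordered_forests_def ordered_tree_def incr_ordered_def
    by auto
qed

lemma mo_forests_eq: "mo_forests R n k = ordered_forests Min_first R {1..n} k"
proof -
  have "block_ordered Min_first (key_less Min_first) ts
      \<longleftrightarrow> (\<forall>s rest. ts = s # rest \<longrightarrow> (\<forall>s'\<in>set rest. lmin s < lmin s'))" for ts
    by (cases ts) (simp_all add: key_less_def)
  then have "(\<forall>ts. Node ts \<in> set (subtrees t) \<longrightarrow> block_ordered Min_first (key_less Min_first) ts)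
      \<longleftrightarrow> minfirst_ordered t" for t
    unfolding minfirst_ordered_def by blast
  then show ?thesis
    unfolding mo_forests_def lo_forests_def ordered_forests_def ordered_tree_def by auto
qed

lemma distinct_concat_map_iff:
  assumes "\<forall>x\<in>set xs. f x \<noteq> []"
  shows "distinct (concat (map f xs)) \<longleftrightarrow> (distinct xs \<and> (\<forall>x\<in>set xs. distinct (f x))
          \<and> (\<forall>x\<in>set xs. \<forall>y\<in>set xs. x \<noteq> y \<longrightarrow> set (f x) \<inter> set (f y) = {}))"
  using assms
proof (induction xs)
  case Nil then show ?case by simp
next
  case (Cons a xs)
  have fa: "f a \<noteq> []" using Cons.prems by simp
  have IH: "distinct (concat (map f xs)) \<longleftrightarrow> (distinct xs \<and> (\<forall>x\<in>set xs. distinct (f x))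
          \<and> (\<forall>x\<in>set xs. \<forall>y\<in>set xs. x \<noteq> y \<longrightarrow> set (f x) \<inter> set (f y) = {}))"
    using Cons by simp
  show ?case
  proof
    assume d: "distinct (concat (map f (a # xs)))"
    then have d1: "distinct (f a)" "distinct (concat (map f xs))"
      "set (f a) \<inter> (\<Union>x\<in>set xs. set (f x)) = {}" by auto
    have "a \<notin> set xs"
    proof
      assume "a \<in> set xs"
      then have "set (f a) \<subseteq> (\<Union>x\<in>set xs. set (f x))" by auto
      then have "set (f a) = {}" using d1(3) Int_absorb2 by metis
      then show False using fa by simp
    qed
    then show "distinct (a # xs) \<and> (\<forall>x\<in>set (a # xs). distinct (f x)) \<and>
      (\<forall>x\<in>set (a # xs). \<forall>y\<in>set (a # xs). x \<noteq> y \<longrightarrow> set (f x) \<inter> set (f y) = {})"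
      using d1 IH by auto
  next
    assume r: "distinct (a # xs) \<and> (\<forall>x\<in>set (a # xs). distinct (f x)) \<and>
      (\<forall>x\<in>set (a # xs). \<forall>y\<in>set (a # xs). x \<noteq> y \<longrightarrow> set (f x) \<inter> set (f y) = {})"
    then have "distinct (concat (map f xs))" using IH by auto
    moreover have "set (f a) \<inter> (\<Union>x\<in>set xs. set (f x)) = {}" using r by auto
    ultimately show "distinct (concat (map f (a # xs)))" using r by simp
  qed
qed

lemma ordered_tree_Leaf [simp]: "ordered_tree ord R (Leaf i)"
  unfolding ordered_tree_def phylo_R_def by simp

lemma phylo_R_Node:
  "phylo_R R (Node ts) \<longleftrightarrow> 2 \<le> length ts \<and> length ts \<in> R \<and> (\<forall>t\<in>set ts. phylo_R R t)"
  unfolding phylo_R_def by auto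

lemma phylo_R_leaves_ne_Nil: "phylo_R R t \<Longrightarrow> leaves t \<noteq> []"
proof (induction t)
  case (Node ts)
  then have "ts \<noteq> []" "\<forall>t\<in>set ts. phylo_R R t" unfolding phylo_R_Node by auto
  then show ?case using Node.IH by (cases ts) auto
qed simp

lemma leaves_ne_Nil: "ordered_tree ord R t \<Longrightarrow> leaves t \<noteq> []"
  unfolding ordered_tree_def using phylo_R_leaves_ne_Nil by blast

lemma ordered_tree_Node:
  "ordered_tree ord R (Node ts) \<longleftrightarrow> 2 \<le> length ts \<and> length ts \<in> R
     \<and> block_ordered ord (key_less ord) ts \<and> (\<forall>t\<in>set ts. ordered_tree ord R t) \<and> distinct ts
     \<and> (\<forall>t\<in>set ts. \<forall>t'\<in>set ts. t \<noteq> t' \<longrightarrow> set (leaves t) \<inter> set (leaves t') = {})"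
proof -
  have nodes: "ordered_tree ord R (Node ts) \<longleftrightarrow> 2 \<le> length ts \<and> length ts \<in> R
      \<and> block_ordered ord (key_less ord) ts \<and> distinct (concat (map leaves ts))
      \<and> (\<forall>t\<in>set ts. phylo_R R t \<and> (\<forall>us. Node us \<in> set (subtrees t)
          \<longrightarrow> block_ordered ord (key_less ord) us))"
    unfolding ordered_tree_def phylo_R_def by auto
  show ?thesis
  proof
    assume "ordered_tree ord R (Node ts)"
    moreover then have "\<forall>t\<in>set ts. leaves t \<noteq> []"
      using phylo_R_leaves_ne_Nil unfolding nodes by blast
    ultimately show "2 \<le> length ts \<and> length ts \<in> R \<and> block_ordered ord (key_less ord) ts
      \<and> (\<forall>t\<in>set ts. ordered_tree ord R t) \<and> distinct ts
      \<and> (\<forall>t\<in>set ts. \<forall>t'\<in>set ts. t \<noteq> t' \<longrightarrow> set (leaves t) \<inter> set (leaves t') = {})"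
      unfolding nodes distinct_concat_map_iff[OF \<open>\<forall>t\<in>set ts. leaves t \<noteq> []\<close>]
      by (auto simp: ordered_tree_def)
  next
    assume *: "2 \<le> length ts \<and> length ts \<in> R \<and> block_ordered ord (key_less ord) ts
      \<and> (\<forall>t\<in>set ts. ordered_tree ord R t) \<and> distinct ts
      \<and> (\<forall>t\<in>set ts. \<forall>t'\<in>set ts. t \<noteq> t' \<longrightarrow> set (leaves t) \<inter> set (leaves t') = {})"
    then have "\<forall>t\<in>set ts. leaves t \<noteq> []" using leaves_ne_Nil by blast
    with * show "ordered_tree ord R (Node ts)"
      unfolding nodes distinct_concat_map_iff[OF \<open>\<forall>t\<in>set ts. leaves t \<noteq> []\<close>]
      by (auto simp: ordered_tree_def)
  qed
qed

lemma tree_key_in_leaves: "leaves t \<noteq> [] \<Longrightarrow> tree_key ord t \<in> set (leaves t)"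
  by (cases ord) (auto simp: lmin_def lmax_def)

lemma inj_on_tree_key:
  assumes F: "F \<in> ordered_forests ord R S k"
  shows "inj_on (tree_key ord) F"
proof (rule inj_onI)
  fix t t' assume t: "t \<in> F" "t' \<in> F" "tree_key ord t = tree_key ord t'"
  have "tree_key ord t \<in> set (leaves t)" "tree_key ord t' \<in> set (leaves t')"
    using tree_key_in_leaves[OF leaves_ne_Nil[OF ordered_forestsD(3)[OF F]]] t(1,2) by blast+
  then show "t = t'" using ordered_forestsD(4)[OF F t(1,2)] t(3) by auto
qed

lemma ordered_forest_card_le:
  assumes F: "F \<in> ordered_forests ord R S k" and "finite S"
  shows "k \<le> card S"
proof -
  have "tree_key ord t \<in> S" if "t \<in> F" for t
    using tree_key_in_leaves[OF leaves_ne_Nil[OF ordered_forestsD(3)[OF F that]]]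
      ordered_forestsD(5)[OF F] that by blast
  then have "tree_key ord ` F \<subseteq> S" by blast
  then show ?thesis
    using card_inj_on_le[OF inj_on_tree_key[OF F]] \<open>finite S\<close> ordered_forestsD(2)[OF F] by blast
qed

lemma child_leaves_psubset:
  assumes t: "ordered_tree ord R (Node ts)" and c: "c \<in> set ts"
  shows "set (leaves c) \<subset> set (leaves (Node ts))"
proof -
  note children = t[unfolded ordered_tree_Node]
  obtain c' where c': "c' \<in> set ts" "c' \<noteq> c"
  proof -
    have "card (set ts - {c}) > 0"
      using children c distinct_card[of ts] by (simp add: card_Diff_singleton)
    then have "set ts - {c} \<noteq> {}" by (simp add: card_gt_0_iff)
    then show ?thesis using that by blast
  qed
  have "leaves c' \<noteq> []" using children c'(1) leaves_ne_Nil by blast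
  then obtain a where a: "a \<in> set (leaves c')" by (cases "leaves c'") auto
  moreover have "set (leaves c) \<inter> set (leaves c') = {}" using children c c' by blast
  ultimately have "a \<notin> set (leaves c)" "a \<in> set (leaves (Node ts))" using c'(1) by auto
  then show ?thesis using c by auto
qed

lemma finite_ordered_trees_on:
  assumes "finite S"
  shows "finite {t. ordered_tree ord R t \<and> set (leaves t) \<subseteq> S}"
  using assms
proof (induction S rule: finite_psubset_induct)
  case (psubset S)
  define smaller where
    "smaller = (\<Union>S'\<in>Pow S - {S}. {t. ordered_tree ord R t \<and> set (leaves t) \<subseteq> S'})"
  have "finite smaller" unfolding smaller_def using psubset by auto
  then have finite_candidates: "finite (Leaf ` S \<union> Node ` {ts. set ts \<subseteq> smaller \<and> distinct ts})"
    using psubset.hyps(1) by (simp add: finite_subset_distinct)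
  have "{t. ordered_tree ord R t \<and> set (leaves t) \<subseteq> S}
      \<subseteq> Leaf ` S \<union> Node ` {ts. set ts \<subseteq> smaller \<and> distinct ts}"
  proof
    fix t assume t: "t \<in> {t. ordered_tree ord R t \<and> set (leaves t) \<subseteq> S}"
    show "t \<in> Leaf ` S \<union> Node ` {ts. set ts \<subseteq> smaller \<and> distinct ts}"
    proof (cases t)
      case (Node ts)
      have "c \<in> smaller" if c: "c \<in> set ts" for c
      proof -
        have "set (leaves c) \<subset> S"
          using child_leaves_psubset[of ord R ts c] t Node c by auto
        moreover have "ordered_tree ord R c" using t Node c ordered_tree_Node[of ord R ts] by auto
        ultimately show ?thesis unfolding smaller_def by blast
      qed
      then show ?thesis using Node t ordered_tree_Node[of ord R ts] by auto
    qed (use t in auto)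
  qed
  then show ?case using finite_candidates by (rule finite_subset)
qed

lemma finite_ordered_forests:
  assumes "finite S"
  shows "finite (ordered_forests ord R S k)"
proof -
  have "ordered_forests ord R S k \<subseteq> Pow {t. ordered_tree ord R t \<and> set (leaves t) \<subseteq> S}"
    unfolding ordered_forests_def by auto
  then show ?thesis using finite_ordered_trees_on[OF assms] finite_subset by blast
qed

lemma obtain_key_order_enumeration:
  fixes key :: "'a \<Rightarrow> nat"
  assumes "finite F" "inj_on key F"
  obtains h where "bij_betw h {1..card F} F"
    "\<And>i j. i \<in> {1..card F} \<Longrightarrow> j \<in> {1..card F} \<Longrightarrow> i < j \<longleftrightarrow> key (h i) < key (h j)"
proof -
  define xs where "xs = sorted_list_of_set (key ` F)"
  have xs: "sorted_wrt (<) xs" "distinct xs" "set xs = key ` F" "length xs = card F"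
    using assms by (simp_all add: xs_def card_image)
  define h where "h i = inv_into F key (xs ! (i - 1))" for i
  have "bij_betw (\<lambda>i. i - 1) {1..card F} {..<length xs}"
    by (rule bij_betw_byWitness[where f'=Suc]) (auto simp: xs(4))
  moreover have "bij_betw ((!) xs) {..<length xs} (key ` F)"
    by (rule bij_betw_nth) (simp_all add: xs)
  moreover have "bij_betw (inv_into F key) (key ` F) F"
    by (rule bij_betw_inv_into[OF inj_on_imp_bij_betw[OF assms(2)]])
  ultimately have "bij_betw (inv_into F key \<circ> ((!) xs \<circ> (\<lambda>i. i - 1))) {1..card F} F"
    by (blast intro: bij_betw_trans)
  then have "bij_betw h {1..card F} F" unfolding h_def comp_def .
  moreover have "i < j \<longleftrightarrow> key (h i) < key (h j)" if "i \<in> {1..card F}" "j \<in> {1..card F}" for i j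
  proof -
    have idx: "i - 1 < length xs" "j - 1 < length xs" using that xs(4) by auto
    then have "key (h i) = xs ! (i - 1)" "key (h j) = xs ! (j - 1)"
      unfolding h_def using xs(3) by (metis f_inv_into_f nth_mem)+
    with idx show ?thesis
      using sorted_wrt_nth_less[OF xs(1)] that nth_eq_iff_index_eq[OF xs(2)]
      by (metis diff_less_mono not_less_iff_gr_or_eq atLeastAtMost_iff)
  qed
  ultimately show ?thesis using that by blast
qed

lemma card_list_partitions_forest:
  assumes F: "F \<in> ordered_forests ord R S j"
  shows "card (list_partitions ord (<) R {1..j} k)
    = card (list_partitions ord (key_less ord) R F k)"
proof -
  obtain h where "bij_betw h {1..j} F"
    "\<And>x y. x \<in> {1..j} \<Longrightarrow> y \<in> {1..j} \<Longrightarrow> x < y \<longleftrightarrow> tree_key ord (h x) < tree_key ord (h y)"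
    using obtain_key_order_enumeration[OF ordered_forestsD(1)[OF F] inj_on_tree_key[OF F]]
    ordered_forestsD(2)[OF F] by metis
  then show ?thesis by (intro card_list_partitions_bij_betw) (auto simp: key_less_def)
qed

section \<open>Grafting lists of trees\<close>

text \<open>Grafting an arrangement of the trees of a forest into \<open>k\<close> lists yields a forest with \<open>k\<close>
  trees together with the set of new roots. Conversely any set of inner roots can be ungrafted,
  provided \<open>1 \<in> R\<close>: an unmarked root is read as a singleton list.\<close>

definition graft :: "ptree list \<Rightarrow> ptree" where
  "graft l = (if length l = 1 then hd l else Node l)"

fun children :: "ptree \<Rightarrow> ptree list" where
  "children (Leaf i) = []"
| "children (Node ts) = ts"

definition unroot :: "ptree set \<Rightarrow> ptree \<Rightarrow> ptree list" where
  "unroot M t = (if t \<in> M then children t else [t])"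

definition inner_roots :: "ptree set \<Rightarrow> ptree set" where
  "inner_roots G = {t\<in>G. \<exists>ts. t = Node ts}"

definition list_union :: "'a list set \<Rightarrow> 'a set" where
  "list_union Ls = (\<Union>l\<in>Ls. set l)"

definition graft_forest :: "ptree list set \<Rightarrow> ptree set \<times> ptree set" where
  "graft_forest Ls = (graft ` Ls, graft ` {l\<in>Ls. length l \<noteq> 1})"

fun ungraft_forest :: "ptree set \<times> ptree set \<Rightarrow> ptree list set" where
  "ungraft_forest (G, M) = unroot M ` G"

definition forest_list_partitions ::
    "block_order \<Rightarrow> nat set \<Rightarrow> nat \<Rightarrow> nat \<Rightarrow> ptree list set set" where
  "forest_list_partitions ord R n k = {Ls.
     list_union Ls \<in> ordered_forests ord R {1..n} (card (list_union Ls))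
     \<and> Ls \<in> list_partitions ord (key_less ord) R (list_union Ls) k}"

definition marked_forests ::
    "block_order \<Rightarrow> nat set \<Rightarrow> nat \<Rightarrow> nat \<Rightarrow> (ptree set \<times> ptree set) set" where
  "marked_forests ord R n k = Sigma (ordered_forests ord R {1..n} k) (\<lambda>G. Pow (inner_roots G))"

lemma block_ordered_singleton: "block_ordered ord lt [t]"
  by (cases ord) simp_all

context
  fixes ord :: block_order and R :: "nat set" and n k :: nat and Ls :: "ptree list set"
  assumes Ls: "Ls \<in> forest_list_partitions ord R n k"
begin

lemma list_union_in_ordered_forests:
  "list_union Ls \<in> ordered_forests ord R {1..n} (card (list_union Ls))"
  using Ls unfolding forest_list_partitions_def by auto

lemma list_partition_list_union: "Ls \<in> list_partitions ord (key_less ord) R (list_union Ls) k"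
  using Ls unfolding forest_list_partitions_def by auto

lemma listed_trees_disjoint:
  assumes "l \<in> Ls" "l' \<in> Ls" "t \<in> set l" "t' \<in> set l'" "t \<noteq> t'"
  shows "set (leaves t) \<inter> set (leaves t') = {}"
  using ordered_forestsD(4)[OF list_union_in_ordered_forests] assms unfolding list_union_def
    by blast

lemma ordered_tree_listed:
  assumes "l \<in> Ls" "t \<in> set l"
  shows "ordered_tree ord R t"
  using ordered_forestsD(3)[OF list_union_in_ordered_forests] assms unfolding list_union_def
    by blast

lemma leaves_graft: "l \<in> Ls \<Longrightarrow> set (leaves (graft l)) = (\<Union>t\<in>set l. set (leaves t))"
  using list_partitionsD(3)[OF list_partition_list_union] by (cases l) (auto simp: graft_def)

lemma graft_leaves_disjoint:
  assumes "l \<in> Ls" "l' \<in> Ls" "l \<noteq> l'"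
  shows "set (leaves (graft l)) \<inter> set (leaves (graft l')) = {}"
  using list_partitionsD(4)[OF list_partition_list_union assms] listed_trees_disjoint assms
  unfolding leaves_graft[OF assms(1)] leaves_graft[OF assms(2)] by blast

lemma ordered_tree_graft:
  assumes l: "l \<in> Ls"
  shows "ordered_tree ord R (graft l)"
proof (cases "length l = 1")
  case True
  then show ?thesis using ordered_tree_listed[OF l] by (cases l) (auto simp: graft_def)
next
  case False
  have l_props: "l \<noteq> []" "distinct l" "length l \<in> R" "block_ordered ord (key_less ord) l"
    using list_partitionsD(3)[OF list_partition_list_union l] by auto
  moreover have "2 \<le> length l" using False l_props(1) by (cases "length l") auto
  ultimately show ?thesis
    using False ordered_tree_listed[OF l] listed_trees_disjoint[OF l l]
    by (auto simp: graft_def ordered_tree_Node)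
qed

lemma inj_on_graft: "inj_on graft Ls"
proof (rule inj_onI)
  fix l l' assume l: "l \<in> Ls" "l' \<in> Ls" and eq: "graft l = graft l'"
  have "leaves (graft l) \<noteq> []" using leaves_ne_Nil[OF ordered_tree_graft[OF l(1)]] .
  then show "l = l'" using graft_leaves_disjoint[OF l] eq by (cases "leaves (graft l)") auto
qed

lemma graft_forest_in_marked_forests: "graft_forest Ls \<in> marked_forests ord R n k"
proof -
  note P = list_partitionsD[OF list_partition_list_union]
  have "graft ` Ls \<in> ordered_forests ord R {1..n} k"
    unfolding ordered_forests_def
  proof (intro CollectI conjI ballI impI)
    show "finite (graft ` Ls)" "card (graft ` Ls) = k"
      using P(1,2) card_image[OF inj_on_graft] by simp_all
    show "ordered_tree ord R t" if "t \<in> graft ` Ls" for t using that ordered_tree_graft by blast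
    show "set (leaves t) \<inter> set (leaves t') = {}" if "t \<in> graft ` Ls" "t' \<in> graft ` Ls" "t \<noteq> t'"
      for t t' using that graft_leaves_disjoint by blast
    have "(\<Union>t\<in>graft ` Ls. set (leaves t)) = (\<Union>t\<in>list_union Ls. set (leaves t))"
      using leaves_graft unfolding list_union_def by auto
    then show "(\<Union>t\<in>graft ` Ls. set (leaves t)) = {1..n}"
      using ordered_forestsD(5)[OF list_union_in_ordered_forests] by simp
  qed
  moreover have "graft ` {l\<in>Ls. length l \<noteq> 1} \<subseteq> inner_roots (graft ` Ls)"
    unfolding inner_roots_def graft_def by auto
  ultimately show ?thesis unfolding graft_forest_def marked_forests_def by auto
qed

lemma ungraft_graft_forest: "ungraft_forest (graft_forest Ls) = Ls"
proof -
  have "unroot (graft ` {l\<in>Ls. length l \<noteq> 1}) (graft l) = l" if "l \<in> Ls" for l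
  proof (cases "length l = 1")
    case True
    then have "graft l \<notin> graft ` {l\<in>Ls. length l \<noteq> 1}"
      using that inj_on_graft by (auto dest: inj_onD)
    then show ?thesis using True by (cases l) (auto simp: unroot_def graft_def)
  qed (use that in \<open>auto simp: unroot_def graft_def\<close>)
  then show ?thesis unfolding graft_forest_def by (force simp: image_image)
qed

end

context
  fixes ord :: block_order and R :: "nat set" and n k :: nat and G M :: "ptree set"
  assumes GM: "(G, M) \<in> marked_forests ord R n k" and R1: "1 \<in> R"
begin

lemma marked_forest: "G \<in> ordered_forests ord R {1..n} k"
  using GM unfolding marked_forests_def by auto

lemma marked_root:
  assumes "t \<in> M"
  shows "t \<in> G" "Node (children t) = t" "ordered_tree ord R (Node (children t))"
  using GM assms ordered_forestsD(3)[OF marked_forest]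
  unfolding marked_forests_def inner_roots_def by auto

lemmas marked_root_children = marked_root(3)[unfolded ordered_tree_Node]

lemma unroot_list:
  assumes "t \<in> G"
  shows "unroot M t \<noteq> [] \<and> distinct (unroot M t) \<and> length (unroot M t) \<in> R
    \<and> block_ordered ord (key_less ord) (unroot M t)"
  using marked_root_children[of t] R1 block_ordered_singleton
    by (auto simp: unroot_def split: if_splits)

lemma unroot_trees:
  assumes "t \<in> G" "c \<in> set (unroot M t)"
  shows "ordered_tree ord R c"
  using assms marked_root_children[of t] ordered_forestsD(3)[OF marked_forest]
  by (auto simp: unroot_def split: if_splits)

lemma leaves_unroot:
  assumes "t \<in> G"
  shows "(\<Union>c\<in>set (unroot M t). set (leaves c)) = set (leaves t)"
proof (cases "t \<in> M")
  case True
  then have "set (leaves t) = set (leaves (Node (children t)))" by (simp only: marked_root(2))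
  then show ?thesis using True by (simp add: unroot_def)
qed (simp add: unroot_def)

lemma unroot_leaves_disjoint:
  assumes "t \<in> G" "t' \<in> G" "c \<in> set (unroot M t)" "c' \<in> set (unroot M t')" "c \<noteq> c'"
  shows "set (leaves c) \<inter> set (leaves c') = {}"
proof (cases "t = t'")
  case True
  then show ?thesis
    using assms marked_root_children[of t] by (auto simp: unroot_def split: if_splits)
next
  case False
  then have "set (leaves t) \<inter> set (leaves t') = {}"
    using ordered_forestsD(4)[OF marked_forest] assms(1,2) by blast
  then show ?thesis using leaves_unroot[OF assms(1)] leaves_unroot[OF assms(2)] assms(3,4) by blast
qed

lemma unroot_disjoint:
  assumes "t \<in> G" "t' \<in> G" "t \<noteq> t'"
  shows "set (unroot M t) \<inter> set (unroot M t') = {}"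
proof (rule equals0I)
  fix c assume c: "c \<in> set (unroot M t) \<inter> set (unroot M t')"
  have "set (leaves t) \<inter> set (leaves t') = {}"
    using ordered_forestsD(4)[OF marked_forest] assms by blast
  moreover have "leaves c \<noteq> []" using unroot_trees[OF assms(1)] c leaves_ne_Nil by blast
  then obtain a where "a \<in> set (leaves c)" by (cases "leaves c") auto
  then have "a \<in> set (leaves t)" "a \<in> set (leaves t')"
    using leaves_unroot[OF assms(1)] leaves_unroot[OF assms(2)] c by blast+
  ultimately show False by blast
qed

lemma inj_on_unroot: "inj_on (unroot M) G"
  using unroot_disjoint unroot_list by (intro inj_onI) (metis Int_absorb set_empty)

lemma ungraft_forest_in_forest_list_partitions:
  "ungraft_forest (G, M) \<in> forest_list_partitions ord R n k"
proof -
  note F = ordered_forestsD[OF marked_forest]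
  let ?trees = "\<Union>t\<in>G. set (unroot M t)"
  have trees: "list_union (unroot M ` G) = ?trees" by (simp add: list_union_def)
  have "?trees \<in> ordered_forests ord R {1..n} (card ?trees)"
    unfolding ordered_forests_def
  proof (intro CollectI conjI ballI impI)
    show "finite ?trees" using F(1) by simp
    show "ordered_tree ord R c" if "c \<in> ?trees" for c using that unroot_trees by blast
    show "set (leaves c) \<inter> set (leaves c') = {}" if "c \<in> ?trees" "c' \<in> ?trees" "c \<noteq> c'" for c c'
      using that unroot_leaves_disjoint by blast
    show "(\<Union>c\<in>?trees. set (leaves c)) = {1..n}" using leaves_unroot F(5) by auto
  qed simp
  moreover have "unroot M ` G \<in> list_partitions ord (key_less ord) R ?trees k"
    unfolding list_partitions_def
    using F(1,2) card_image[OF inj_on_unroot] unroot_list unroot_disjoint by auto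
  ultimately show ?thesis by (simp add: forest_list_partitions_def trees)
qed

lemma graft_ungraft_forest: "graft_forest (ungraft_forest (G, M)) = (G, M)"
proof -
  have "graft (unroot M t) = t" if "t \<in> G" for t
    using that marked_root(2)[of t] marked_root_children[of t]
      by (auto simp: unroot_def graft_def split: if_splits)
  moreover have "length (unroot M t) \<noteq> 1 \<longleftrightarrow> t \<in> M" for t
    using marked_root_children[of t] by (auto simp: unroot_def split: if_splits)
  moreover have "M \<subseteq> G" using marked_root(1) by blast
  ultimately show ?thesis unfolding graft_forest_def by (force simp: image_image)
qed

end

lemma bij_betw_graft_forest:
  assumes "1 \<in> R"
  shows "bij_betw graft_forest (forest_list_partitions ord R n k) (marked_forests ord R n k)"
proof (rule bij_betw_byWitness[where f'=ungraft_forest])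
  show "\<forall>Ls\<in>forest_list_partitions ord R n k. ungraft_forest (graft_forest Ls) = Ls"
    using ungraft_graft_forest by blast
  show "\<forall>GM\<in>marked_forests ord R n k. graft_forest (ungraft_forest GM) = GM"
    using graft_ungraft_forest[OF _ assms] by auto
  show "graft_forest ` forest_list_partitions ord R n k \<subseteq> marked_forests ord R n k"
    using graft_forest_in_marked_forests by blast
  show "ungraft_forest ` marked_forests ord R n k \<subseteq> forest_list_partitions ord R n k"
    using ungraft_forest_in_forest_list_partitions[OF _ assms] by auto
qed

section \<open>Cancellation\<close>

definition forest_sign :: "nat \<Rightarrow> ptree set \<Rightarrow> real" where
  "forest_sign n F = (-1) ^ (n - card F) * (-1) ^ forest_edges F"

lemma even_minus_odd_eq_sum:
  assumes "finite FF"
  shows "even_minus_odd FF = (\<Sum>F\<in>FF. (-1::real) ^ forest_edges F)"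
proof -
  have "(\<Sum>F\<in>FF. (-1::real) ^ forest_edges F) = (\<Sum>F\<in>FF. if even (forest_edges F) then 1 else -1)"
    by (rule sum.cong) auto
  also have "\<dots> = real (card {F\<in>FF. even (forest_edges F)})
      - real (card {F\<in>FF. odd (forest_edges F)})"
    using assms by (simp add: sum.If_cases Int_def conj_commute)
  finally show ?thesis unfolding even_minus_odd_def ..
qed

context
  fixes ord :: block_order and R :: "nat set" and n k :: nat and Ls :: "ptree list set"
  assumes Ls: "Ls \<in> forest_list_partitions ord R n k"
begin

lemma forest_edges_graft_forest:
  "forest_edges (fst (graft_forest Ls))
     = forest_edges (list_union Ls) + (\<Sum>l\<in>{l\<in>Ls. length l \<noteq> 1}. length l)"
proof -
  note P = list_partitionsD[OF list_partition_list_union[OF Ls]]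
  have "forest_edges (list_union Ls) = (\<Sum>l\<in>Ls. \<Sum>t\<in>set l. edges t)"
    unfolding forest_edges_def list_union_def by (rule sum.UNION_disjoint) (use P(1,4) in auto)
  moreover have "edges (graft l) = (\<Sum>t\<in>set l. edges t) + (if length l = 1 then 0 else length l)"
    if "l \<in> Ls" for l
    using P(3)[OF that] sum_list_distinct_conv_sum_set[of l edges]
    by (cases l) (auto simp: graft_def)
  ultimately show ?thesis
    unfolding graft_forest_def fst_conv forest_edges_def sum.reindex[OF inj_on_graft[OF Ls]]
    using P(1) by (simp add: sum.distrib sum.inter_filter) (intro sum.cong; simp)
qed

lemma card_snd_graft_forest: "card (snd (graft_forest Ls)) = card {l\<in>Ls. length l \<noteq> 1}"
  unfolding graft_forest_def snd_conv
  by (rule card_image, rule inj_on_subset[OF inj_on_graft[OF Ls]]) auto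

text \<open>Grafting turns the \<open>k\<close> lists into \<open>k\<close> trees and adds one edge per entry of each list of
  length at least two, so the parities agree up to the number of marked roots.\<close>

lemma forest_sign_graft_forest:
  "forest_sign n (list_union Ls)
     = (-1) ^ (n - k)
       * ((-1) ^ forest_edges (fst (graft_forest Ls)) * (-1) ^ card (snd (graft_forest Ls)))"
proof -
  note P = list_partitionsD[OF list_partition_list_union[OF Ls]]
  let ?short = "{l\<in>Ls. length l = 1}" and ?long = "{l\<in>Ls. length l \<noteq> 1}"
  define B where "B = (\<Sum>l\<in>?long. length l)"
  have split: "Ls = ?short \<union> ?long" "?short \<inter> ?long = {}" "finite ?short" "finite ?long"
    using P(1) by auto
  have "card (list_union Ls) = (\<Sum>l\<in>Ls. length l)"
    using card_eq_sum_length_list_partition[OF list_partition_list_union[OF Ls]] .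
  also have "\<dots> = card ?short + B"
    unfolding B_def by (subst split(1), subst sum.union_disjoint) (use split in auto)
  finally have card_F: "card (list_union Ls) = card ?short + B" .
  have k: "k = card ?short + card ?long"
    using P(2) card_Un_disjoint[OF split(3,4,2)] split(1) by simp
  have "card ?long \<le> B" unfolding B_def using P(3) card_eq_sum[of ?long]
    by (metis (no_types, lifting) One_nat_def Suc_leI length_greater_0_conv mem_Collect_eq sum_mono)
  moreover have "card (list_union Ls) \<le> n"
    using ordered_forest_card_le[OF list_union_in_ordered_forests[OF Ls]] by simp
  ultimately have "n - k + (forest_edges (fst (graft_forest Ls)) + card (snd (graft_forest Ls)))
      = (n - card (list_union Ls)) + forest_edges (list_union Ls) + 2 * B"
    unfolding forest_edges_graft_forest card_snd_graft_forest B_def[symmetric] card_F k by linarith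
  then show ?thesis
    unfolding forest_sign_def power_add[symmetric] by (simp add: power_add power_mult)
qed

end

lemma sum_Pow_alternating:
  assumes "finite A"
  shows "(\<Sum>M\<in>Pow A. (-1::real) ^ card M) = (if A = {} then 1 else 0)"
proof -
  have "(\<Sum>M\<in>Pow A. (-1::real) ^ card M) = 0 ^ card A"
    using prod_diff_conv_sum[OF assms, of "\<lambda>_. 1::real" "\<lambda>_. 1"] by simp
  then show ?thesis using assms by (simp add: power_0_left)
qed

lemma ordered_forests_without_inner_roots:
  "{G \<in> ordered_forests ord R {1..n} k. inner_roots G = {}}
    = (if n = k then {Leaf ` {1..n}} else {})"
proof -
  have leaf_forest: "Leaf ` {1..n} \<in> ordered_forests ord R {1..n} n"
    unfolding ordered_forests_def by (auto simp: card_image inj_on_def)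
  have leaf_only: "G = Leaf ` {1..n}"
    if G: "G \<in> ordered_forests ord R {1..n} k" "inner_roots G = {}" for G
  proof -
    have leaf: "\<exists>i. t = Leaf i" if "t \<in> G" for t
      using G(2) that unfolding inner_roots_def by (cases t) auto
    note cover = ordered_forestsD(5)[OF G(1)]
    show ?thesis
    proof (intro equalityI subsetI)
      fix t assume t: "t \<in> G"
      then obtain i where "t = Leaf i" using leaf by blast
      moreover have "i \<in> {1..n}" using cover t \<open>t = Leaf i\<close> by force
      ultimately show "t \<in> Leaf ` {1..n}" by blast
    next
      fix u assume "u \<in> Leaf ` {1..n}"
      then obtain i where i: "i \<in> {1..n}" "u = Leaf i" by blast
      then obtain t where t: "t \<in> G" "i \<in> set (leaves t)" using cover by blast
      then show "u \<in> G" using leaf[OF t(1)] i by auto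
    qed
  qed
  have "card (Leaf ` {1..n}) = n" by (simp add: card_image inj_on_def)
  then have size: "n = k" if "G \<in> ordered_forests ord R {1..n} k" "inner_roots G = {}" for G
    using leaf_only[OF that] ordered_forestsD(2)[OF that(1)] by argo
  have no_roots: "inner_roots (Leaf ` {1..n}) = {}" unfolding inner_roots_def by blast
  show ?thesis
  proof (cases "n = k")
    case True
    show ?thesis
    proof (rule set_eqI, rule iffI)
      fix G assume "G \<in> {G \<in> ordered_forests ord R {1..n} k. inner_roots G = {}}"
      then have "G = Leaf ` {1..n}" by (intro leaf_only) auto
      then show "G \<in> (if n = k then {Leaf ` {1..n}} else {})" using True by simp
    qed (use True leaf_forest no_roots in auto)
  next
    case False
    then show ?thesis using size by auto
  qed
qed

lemma sum_marked_forests: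
  "(\<Sum>(G, M)\<in>marked_forests ord R n k. (-1::real) ^ forest_edges G * (-1) ^ card M)
     = (if n = k then 1 else 0)"
proof -
  have finite: "finite (ordered_forests ord R {1..n} k)" by (rule finite_ordered_forests) simp
  have finite_roots: "finite (inner_roots G)" if "G \<in> ordered_forests ord R {1..n} k" for G
    using ordered_forestsD(1)[OF that] unfolding inner_roots_def by simp
  have "(\<Sum>(G, M)\<in>marked_forests ord R n k. (-1::real) ^ forest_edges G * (-1) ^ card M)
      = (\<Sum>G\<in>ordered_forests ord R {1..n} k.
          (-1) ^ forest_edges G * (\<Sum>M\<in>Pow (inner_roots G). (-1) ^ card M))"
    unfolding marked_forests_def using finite finite_roots
    by (simp add: sum.Sigma[symmetric] sum_distrib_left)
  also have "\<dots> = (\<Sum>G\<in>{G \<in> ordered_forests ord R {1..n} k. inner_roots G = {}}.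
      (-1) ^ forest_edges G)"
    using finite finite_roots
      by (simp add: sum_Pow_alternating sum.inter_filter) (rule sum.cong; simp)
  also have "\<dots> = (if n = k then 1 else 0)"
    unfolding ordered_forests_without_inner_roots forest_edges_def
      by (simp add: sum.reindex inj_on_def)
  finally show ?thesis .
qed

lemma sum_forest_list_partitions_forest_sign:
  assumes "1 \<in> R"
  shows "(\<Sum>Ls\<in>forest_list_partitions ord R n k. forest_sign n (list_union Ls))
    = (if n = k then 1 else 0)"
proof -
  have "(\<Sum>Ls\<in>forest_list_partitions ord R n k. forest_sign n (list_union Ls))
      = (\<Sum>Ls\<in>forest_list_partitions ord R n k. (-1) ^ (n - k)
          * (case graft_forest Ls of (G, M) \<Rightarrow> (-1) ^ forest_edges G * (-1) ^ card M))"
    by (intro sum.cong) (simp_all add: forest_sign_graft_forest split: prod.split)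
  also have "\<dots> = (-1) ^ (n - k) * (\<Sum>Ls\<in>forest_list_partitions ord R n k.
      (\<lambda>(G, M). (-1) ^ forest_edges G * (-1) ^ card M) (graft_forest Ls))"
    by (simp add: sum_distrib_left)
  also have "\<dots> = (-1) ^ (n - k)
      * (\<Sum>(G, M)\<in>marked_forests ord R n k. (-1) ^ forest_edges G * (-1) ^ card M)"
    unfolding sum.reindex_bij_betw[OF bij_betw_graft_forest[OF assms]] ..
  finally show ?thesis by (simp add: sum_marked_forests)
qed

lemma forest_list_partitions_eq_UN:
  assumes "1 \<le> n"
  shows "forest_list_partitions ord R n k
    = (\<Union>j\<in>{1..n}. \<Union>F\<in>ordered_forests ord R {1..n} j. list_partitions ord (key_less ord) R F k)"
    (is "_ = ?U")
proof (intro equalityI subsetI)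
  fix Ls assume Ls: "Ls \<in> forest_list_partitions ord R n k"
  note F = list_union_in_ordered_forests[OF Ls]
  have "list_union Ls \<noteq> {}" using ordered_forestsD(5)[OF F] assms by auto
  then have "1 \<le> card (list_union Ls)" using ordered_forestsD(1)[OF F]
    by (simp add: Suc_le_eq card_gt_0_iff)
  moreover have "card (list_union Ls) \<le> n" using ordered_forest_card_le[OF F] by simp
  ultimately show "Ls \<in> ?U"
    using F list_partition_list_union[OF Ls] by auto
next
  fix Ls assume "Ls \<in> ?U"
  then obtain j F
    where F: "F \<in> ordered_forests ord R {1..n} j" "Ls \<in> list_partitions ord (key_less ord) R F k"
    by blast
  moreover have "list_union Ls = F" unfolding list_union_def using list_partitionsD(5)[OF F(2)] .
  ultimately show "Ls \<in> forest_list_partitions ord R n k"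
    unfolding forest_list_partitions_def using ordered_forestsD(2)[OF F(1)] by simp
qed

text \<open>Each summand counts, with sign, the pairs of a forest on \<open>[n]\<close> with \<open>j\<close> trees and an
  arrangement of its trees into \<open>k\<close> lists.\<close>

lemma signed_forests_times_card_list_partitions:
  "((-1) ^ (n - j) * even_minus_odd (ordered_forests ord R {1..n} j))
      * real (card (list_partitions ord (<) R {1..j} k))
    = (\<Sum>F\<in>ordered_forests ord R {1..n} j.
        \<Sum>Ls\<in>list_partitions ord (key_less ord) R F k. forest_sign n (list_union Ls))"
proof -
  let ?forests = "ordered_forests ord R {1..n} j"
  have lists: "(\<Sum>Ls\<in>list_partitions ord (key_less ord) R F k. forest_sign n (list_union Ls))
      = real (card (list_partitions ord (key_less ord) R F k)) * forest_sign n F" for F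
  proof -
    have "(\<Sum>Ls\<in>list_partitions ord (key_less ord) R F k. forest_sign n (list_union Ls))
        = (\<Sum>Ls\<in>list_partitions ord (key_less ord) R F k. forest_sign n F)"
      unfolding list_union_def by (intro sum.cong refl) (metis list_partitionsD(5))
    then show ?thesis by simp
  qed
  have "(-1) ^ (n - j) * even_minus_odd ?forests = (\<Sum>F\<in>?forests. forest_sign n F)"
    unfolding even_minus_odd_eq_sum[OF finite_ordered_forests[OF finite_atLeastAtMost]]
      sum_distrib_left forest_sign_def
    by (intro sum.cong) (auto dest: ordered_forestsD(2))
  then show ?thesis
    using card_list_partitions_forest[of _ ord R "{1..n}" j k]
    by (simp add: sum_distrib_right lists) (intro sum.cong; simp)
qed

lemma sum_forests_times_list_partitions:
  assumes "1 \<in> R" "1 \<le> n"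
  shows "(\<Sum>j=1..n. ((-1) ^ (n - j) * even_minus_odd (ordered_forests ord R {1..n} j))
            * real (card (list_partitions ord (<) R {1..j} k)))
       = (if n = k then 1 else 0)"
proof -
  let ?forests = "\<lambda>j. ordered_forests ord R {1..n} j"
  let ?lists = "\<lambda>F. list_partitions ord (key_less ord) R F k"
  have finite_forests: "finite (?forests j)" for j by (rule finite_ordered_forests) simp
  have disjoint_forests: "?forests i \<inter> ?forests j = {}" if "i \<noteq> j" for i j
    using that unfolding ordered_forests_def by blast
  have disjoint_lists: "?lists F \<inter> ?lists F' = {}" if "F \<noteq> F'" for F F'
    using that unfolding list_partitions_def by blast
  have "(\<Sum>j=1..n. ((-1) ^ (n - j) * even_minus_odd (?forests j))
          * real (card (list_partitions ord (<) R {1..j} k)))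
      = (\<Sum>j\<in>{1..n}. \<Sum>F\<in>?forests j. \<Sum>Ls\<in>?lists F. forest_sign n (list_union Ls))"
    unfolding signed_forests_times_card_list_partitions ..
  also have "\<dots> = (\<Sum>F\<in>(\<Union>j\<in>{1..n}. ?forests j). \<Sum>Ls\<in>?lists F. forest_sign n (list_union Ls))"
    using finite_forests disjoint_forests by (simp add: sum.UNION_disjoint)
  also have "\<dots> = (\<Sum>Ls\<in>(\<Union>F\<in>(\<Union>j\<in>{1..n}. ?forests j). ?lists F). forest_sign n (list_union Ls))"
    using finite_forests disjoint_lists
    by (intro sum.UNION_disjoint[symmetric])
      (auto intro: finite_list_partitions dest: ordered_forestsD(1))
  also have "\<dots> = (\<Sum>Ls\<in>forest_list_partitions ord R n k. forest_sign n (list_union Ls))"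
    unfolding forest_list_partitions_eq_UN[OF assms(2)] by (simp add: UN_UN_flatten)
  finally show ?thesis using sum_forest_list_partitions_forest_sign[OF assms(1)] by simp
qed

section \<open>The inverse matrices\<close>

lemma lower_tri_list_partitions: "lower_tri (\<lambda>n k. real (card (list_partitions ord lt R {1..n} k)))"
  unfolding lower_tri_def
proof (intro allI impI)
  fix n k :: nat assume "n < k"
  then have "list_partitions ord lt R {1..n} k = {}"
    using list_partition_card_le[of _ ord lt R "{1..n}" k] by force
  then show "real (card (list_partitions ord lt R {1..n} k)) = 0" by simp
qed

lemma lower_tri_signed_forests:
  "lower_tri (\<lambda>n k. (-1) ^ (n - k) * even_minus_odd (ordered_forests ord R {1..n} k))"
  unfolding lower_tri_def
proof (intro allI impI)
  fix n k :: nat assume "n < k"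
  then have "ordered_forests ord R {1..n} k = {}"
    using ordered_forest_card_le[of _ ord R "{1..n}" k] by force
  then show "(-1) ^ (n - k) * even_minus_odd (ordered_forests ord R {1..n} k) = 0"
    by (simp add: even_minus_odd_def)
qed

lemma list_partitions_matrix_inverse:
  fixes ord :: block_order and R :: "nat set"
  defines "A \<equiv> \<lambda>n k. real (card (list_partitions ord (<) R {1..n} k))"
  shows "(mat_invertible A \<longleftrightarrow> 1 \<in> R)
    \<and> (1 \<in> R \<longrightarrow> (\<forall>B n k. is_inverse_mat A B \<longrightarrow> 1 \<le> n \<longrightarrow> 1 \<le> k \<longrightarrow>
          B n k = (-1) ^ (n - k) * even_minus_odd (ordered_forests ord R {1..n} k)))"
proof -
  define C where "C n k = (-1) ^ (n - k) * even_minus_odd (ordered_forests ord R {1..n} k)" for n k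
  have lower: "lower_tri A" "lower_tri C"
    unfolding A_def C_def by (rule lower_tri_list_partitions, rule lower_tri_signed_forests)
  have left: "\<And>n k. 1 \<le> n \<Longrightarrow> 1 \<le> k \<Longrightarrow> mat_mult C A n k = (if n = k then 1 else 0)"
    if "1 \<in> R"
    unfolding mat_mult_def A_def C_def using sum_forests_times_list_partitions[OF that] by simp
  have not_invertible: "\<not> mat_invertible A" if "1 \<notin> R"
  proof
    assume "mat_invertible A"
    then obtain B where "is_inverse_mat A B" unfolding mat_invertible_def by blast
    then have "A 1 1 * B 1 1 = 1" unfolding is_inverse_mat_def by fastforce
    moreover have "A 1 1 = 0" unfolding A_def
      using list_partitions_singleton[OF that, of ord "(<)" "1::nat" 1] by simp
    ultimately show False by simp
  qed
  have inverse: "is_inverse_mat A C" if "1 \<in> R"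
    using left_inverse_imp_is_inverse_mat[OF lower left[OF that]] .
  show ?thesis
  proof (intro conjI impI allI)
    show "mat_invertible A \<longleftrightarrow> 1 \<in> R"
      using inverse not_invertible unfolding mat_invertible_def by blast
  next
    fix B and n k :: nat assume "1 \<in> R" "is_inverse_mat A B" "1 \<le> n" "1 \<le> k"
    then show "B n k = (-1) ^ (n - k) * even_minus_odd (ordered_forests ord R {1..n} k)"
      using is_inverse_mat_unique[OF _ lower(2) left[OF \<open>1 \<in> R\<close>]] unfolding C_def by blast
  qed
qed

theorem theorem3p1:
  fixes R :: "nat set"
  assumes "0 \<notin> R"
  shows "(mat_invertible (\<lambda>n k. real (stirling2_R R n k)) \<longleftrightarrow> 1 \<in> R)
       \<and> (mat_invertible (\<lambda>n k. real (stirling1_R R n k)) \<longleftrightarrow> 1 \<in> R)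
       \<and> (mat_invertible (\<lambda>n k. real (lah_R R n k)) \<longleftrightarrow> 1 \<in> R)
       \<and> (1 \<in> R \<longrightarrow>
           (\<forall>B n k. is_inverse_mat (\<lambda>n k. real (stirling2_R R n k)) B \<longrightarrow> 1 \<le> n \<longrightarrow> 1 \<le> k \<longrightarrow>
              B n k = (-1) ^ (n - k) * even_minus_odd (io_forests R n k))
         \<and> (\<forall>B n k. is_inverse_mat (\<lambda>n k. real (stirling1_R R n k)) B \<longrightarrow> 1 \<le> n \<longrightarrow> 1 \<le> k \<longrightarrow>
              B n k = (-1) ^ (n - k) * even_minus_odd (mo_forests R n k))
         \<and> (\<forall>B n k. is_inverse_mat (\<lambda>n k. real (lah_R R n k)) B \<longrightarrow> 1 \<le> n \<longrightarrow> 1 \<le> k \<longrightarrow>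
              B n k = (-1) ^ (n - k) * even_minus_odd (lo_forests R n k)))"
  unfolding stirling2_R_eq_card_list_partitions stirling1_R_eq_card_list_partitions
    lah_R_eq_card_list_partitions io_forests_eq mo_forests_eq lo_forests_eq
  using list_partitions_matrix_inverse[of Increasing R]
    list_partitions_matrix_inverse[of Min_first R] list_partitions_matrix_inverse[of Unordered R]
  by blast

end
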